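(* Let $n\geq 3$ be an odd integer. Then $n$ is composite or $n\equiv 1\pmod 4$ if and only if there exists an integer $d$ such that both $d$ and $-d$ are quadratic nonresidues modulo $n$.
   Context: An integer $d$ is a quadratic residue modulo $n$ if $d\not\equiv 0 \pmod n$ and $d\equiv x^2\pmod n$ for some integer $x$; it is a quadratic nonresidue modulo $n$ if $d\not\equiv x^2 \pmod n$ for every integer $x$. *)

theory Defs
  imports "HOL-Number_Theory.Number_Theory"
begin

definition quad_nonres :: "int \<Rightarrow> int \<Rightarrow> bool" where
  "quad_nonres n d \<longleftrightarrow> (\<forall>x::int. \<not> [d = x^2] (mod n))"

end

theory Submission
  imports Defs
begin

text \<open>
  For an odd prime \<open>p\<close>, Euler's criterion gives \<open>(-d/p) = (-1)^((p-1)/2) (d/p)\<close>, so \<open>d\<close> and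
  \<open>-d\<close> are nonresidues together exactly when \<open>p \<equiv> 1 (mod 4)\<close>; nonresidues exist modulo
  every \<open>n \<ge> 3\<close>. A nonresidue modulo a divisor of \<open>n\<close> is one modulo \<open>n\<close>. For composite odd
  \<open>n\<close> either \<open>p\<^sup>2 | n\<close> for a prime \<open>p\<close>, and then \<open>p\<close> and \<open>-p\<close> are nonresidues modulo \<open>p\<^sup>2\<close>,
  or \<open>n = p m\<close> with \<open>p, m \<ge> 3\<close> coprime, and the Chinese remainder theorem yields \<open>d\<close>
  which is a nonresidue modulo \<open>p\<close> while \<open>-d\<close> is one modulo \<open>m\<close>.
\<close>

lemma quad_nonres_iff_not_QuadRes: "quad_nonres n d \<longleftrightarrow> \<not> QuadRes n d"
  unfolding quad_nonres_def QuadRes_def by (auto simp: cong_sym_eq)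

lemma quad_nonres_cong:
  assumes "[d = d'] (mod n)" and "quad_nonres n d"
  shows "quad_nonres n d'"
  using assms unfolding quad_nonres_def by (meson cong_sym cong_trans)

lemma quad_nonres_dvd_modulus:
  assumes "k dvd n" and "quad_nonres k d"
  shows "quad_nonres n d"
  using assms unfolding quad_nonres_def by (meson cong_dvd_modulus)

lemma quad_nonres_imp_not_dvd:
  assumes "quad_nonres n d"
  shows "\<not> n dvd d"
  using assms unfolding quad_nonres_def by (metis cong_0_iff power_zero_numeral)

text \<open>Squaring on \<open>{0..<n}\<close> identifies \<open>1\<close> and \<open>n - 1\<close>, so it cannot be onto.\<close>
lemma quad_nonres_exists:
  fixes n :: int
  assumes "n \<ge> 3"
  shows "\<exists>d. quad_nonres n d"
proof -
  define sq where "sq x = x^2 mod n" for x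
  have not_inj: "\<not> inj_on sq {0..<n}"
  proof
    assume "inj_on sq {0..<n}"
    moreover have "(n - 1)^2 = 1 + n * (n - 2)"
      by (simp add: power2_eq_square algebra_simps)
    then have "sq (n - 1) = sq 1"
      by (simp add: sq_def)
    moreover have "n - 1 \<in> {0..<n}" "1 \<in> {0..<n}" "n - 1 \<noteq> 1"
      using assms by auto
    ultimately show False
      by (blast dest: inj_onD)
  qed
  have "sq ` {0..<n} \<noteq> {0..<n}"
    using not_inj eq_card_imp_inj_on [of "{0..<n}" sq] by auto
  moreover have "sq ` {0..<n} \<subseteq> {0..<n}"
    using assms by (auto simp: sq_def)
  ultimately obtain d where d: "d \<in> {0..<n}" "d \<notin> sq ` {0..<n}"
    by blast
  have "quad_nonres n d"
    unfolding quad_nonres_def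
  proof (intro allI notI)
    fix x :: int
    assume "[d = x^2] (mod n)"
    then have "d = sq (x mod n)"
      using d(1) by (simp add: sq_def cong_def power_mod)
    moreover have "x mod n \<in> {0..<n}"
      using assms by simp
    ultimately show False
      using d(2) by blast
  qed
  then show ?thesis ..
qed

lemma odd_prime_ge_3:
  fixes p :: int
  assumes "prime p" and "odd p"
  shows "p \<ge> 3"
  using prime_ge_2_int [OF assms(1)] assms(2) by presburger

lemma quad_nonres_iff_Legendre: "quad_nonres p d \<longleftrightarrow> Legendre d p = -1"
  using quad_nonres_imp_not_dvd [of p d]
  by (auto simp: Legendre_def quad_nonres_iff_not_QuadRes cong_0_iff)

lemma euler_criterion_int:
  fixes p :: int
  assumes "prime p" and "odd p"
  shows "[Legendre d p = d ^ nat ((p - 1) div 2)] (mod p)"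
proof -
  have "p \<ge> 3"
    using assms by (rule odd_prime_ge_3)
  then have "[Legendre d (int (nat p)) = d ^ ((nat p - 1) div 2)] (mod int (nat p))"
    using assms(1) by (intro euler_criterion) auto
  moreover have "(nat p - 1) div 2 = nat ((p - 1) div 2)"
    using \<open>p \<ge> 3\<close> by (simp add: nat_div_distrib nat_diff_distrib)
  ultimately show ?thesis
    using \<open>p \<ge> 3\<close> by simp
qed

lemma cong_imp_eq_abs_le_1:
  fixes a b p :: int
  assumes "[a = b] (mod p)" and "\<bar>a\<bar> \<le> 1" and "\<bar>b\<bar> \<le> 1" and "p \<ge> 3"
  shows "a = b"
proof -
  have "[a + 1 = b + 1] (mod p)"
    using assms(1) by (rule cong_add) simp
  then have "a + 1 = b + 1"
    using assms(2-4) by (intro cong_less_imp_eq_int) auto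
  then show ?thesis
    by simp
qed

lemma Legendre_uminus:
  fixes p d :: int
  assumes "prime p" and "odd p"
  shows "Legendre (-d) p = (-1) ^ nat ((p - 1) div 2) * Legendre d p"
proof (rule cong_imp_eq_abs_le_1)
  define k where "k = nat ((p - 1) div 2)"
  have "[Legendre (-d) p = (-d) ^ k] (mod p)"
    unfolding k_def using assms by (rule euler_criterion_int)
  also have "(-d) ^ k = (-1) ^ k * d ^ k"
    by (rule power_minus)
  also have "[\<dots> = (-1) ^ k * Legendre d p] (mod p)"
    unfolding k_def by (rule cong_scalar_left, rule cong_sym, rule euler_criterion_int [OF assms])
  finally show "[Legendre (-d) p = (-1) ^ k * Legendre d p] (mod p)" .
  show "p \<ge> 3"
    using assms by (rule odd_prime_ge_3)
qed (auto simp: Legendre_def abs_mult)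

lemma minus_one_power_half_eq_1_iff:
  fixes p :: int
  assumes "odd p" and "p > 0"
  shows "(-1) ^ nat ((p - 1) div 2) = (1::int) \<longleftrightarrow> [p = 1] (mod 4)"
proof -
  obtain q where p: "p = 2 * q + 1"
    using assms(1) by (rule oddE)
  with assms(2) have "q \<ge> 0"
    by simp
  have "(-1) ^ nat ((p - 1) div 2) = (1::int) \<longleftrightarrow> even q"
    using \<open>q \<ge> 0\<close> by (simp add: p minus_one_power_iff even_nat_iff)
  also have "\<dots> \<longleftrightarrow> [p = 1] (mod 4)"
    unfolding p cong_iff_dvd_diff by presburger
  finally show ?thesis .
qed

lemma quad_nonres_pair_prime_iff:
  fixes p :: int
  assumes "prime p" and "odd p"
  shows "(\<exists>d. quad_nonres p d \<and> quad_nonres p (-d)) \<longleftrightarrow> [p = 1] (mod 4)"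
proof -
  have "quad_nonres p d \<and> quad_nonres p (-d) \<longleftrightarrow> quad_nonres p d \<and> [p = 1] (mod 4)" for d
    using assms minus_one_power_half_eq_1_iff [OF assms(2)] prime_gt_0_int [OF assms(1)]
    by (auto simp: quad_nonres_iff_Legendre Legendre_uminus)
  moreover obtain r where "quad_nonres p r"
    using quad_nonres_exists odd_prime_ge_3 [OF assms] by blast
  ultimately show ?thesis
    by blast
qed

lemma quad_nonres_prime_square_mult:
  fixes p u :: int
  assumes "prime p" and "\<not> p dvd u"
  shows "quad_nonres (p^2) (u * p)"
  unfolding quad_nonres_def
proof (intro allI notI)
  fix x
  assume "[u * p = x^2] (mod p^2)"
  then have sq_dvd: "p^2 dvd u * p - x^2"
    by (simp add: cong_iff_dvd_diff)
  then have "p dvd u * p - x^2"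
    by (rule dvd_trans [rotated]) (simp add: power2_eq_square)
  then have "p dvd u * p - (u * p - x^2)"
    by (rule dvd_diff [OF dvd_triv_right])
  then have "p dvd x^2"
    by simp
  then have "p^2 dvd x^2"
    using assms(1) by (simp add: prime_dvd_power_iff)
  then have "p^2 dvd (u * p - x^2) + x^2"
    using sq_dvd by (rule dvd_add [rotated])
  then have "p * p dvd u * p"
    by (simp add: power2_eq_square)
  then show False
    using assms prime_gt_0_int [OF assms(1)] by simp
qed

lemma quad_nonres_pair_coprime_mult:
  fixes a b :: int
  assumes "coprime a b" and "quad_nonres a r" and "quad_nonres b s"
  shows "\<exists>d. quad_nonres (a * b) d \<and> quad_nonres (a * b) (-d)"
proof -
  obtain d where "[d = r] (mod a)" and "[d = -s] (mod b)"
    using binary_chinese_remainder_int [OF assms(1)] by blast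
  moreover from this(2) have "[-d = s] (mod b)"
    using cong_minus_minus_iff [of d "-s" b] by simp
  ultimately have "quad_nonres a d" and "quad_nonres b (-d)"
    using quad_nonres_cong cong_sym assms(2,3) by blast+
  then show ?thesis
    by (meson dvd_triv_left dvd_triv_right quad_nonres_dvd_modulus)
qed

lemma quad_nonres_pair_composite:
  fixes n :: int
  assumes "odd n" and "n \<ge> 3" and "\<not> prime n"
  shows "\<exists>d. quad_nonres n d \<and> quad_nonres n (-d)"
proof -
  obtain p where p: "prime p" "p dvd n"
    using prime_divisor_exists [of n] assms(2) by auto
  then obtain m where n: "n = p * m"
    by blast
  have "odd p" "odd m"
    using assms(1) n by auto
  have p3: "p \<ge> 3"
    using p(1) \<open>odd p\<close> by (rule odd_prime_ge_3)
  have "m > 0"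
    using zero_less_mult_pos [of p m] assms(2) n p3 by simp
  moreover have "m \<noteq> 1"
    using assms(3) n p(1) by auto
  ultimately have m3: "m \<ge> 3"
    using \<open>odd m\<close> by presburger
  show ?thesis
  proof (cases "p dvd m")
    case True
    then have "p^2 dvd n"
      using n by (simp add: power2_eq_square mult_dvd_mono)
    moreover have "quad_nonres (p^2) p" and "quad_nonres (p^2) (-p)"
      using quad_nonres_prime_square_mult [OF p(1), of 1] quad_nonres_prime_square_mult [OF p(1), of "-1"]
        not_prime_unit [of p] p(1) by auto
    ultimately show ?thesis
      using quad_nonres_dvd_modulus by blast
  next
    case False
    with p(1) have "coprime p m"
      by (rule prime_imp_coprime)
    moreover obtain r s where "quad_nonres p r" "quad_nonres m s"
      using quad_nonres_exists p3 m3 by meson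
    ultimately show ?thesis
      unfolding n by (rule quad_nonres_pair_coprime_mult)
  qed
qed

theorem mainTheorem3:
  fixes n :: int
  assumes "odd n" and "n \<ge> 3"
  shows "(\<not> prime n \<or> [n = 1] (mod 4)) \<longleftrightarrow>
         (\<exists>d::int. quad_nonres n d \<and> quad_nonres n (-d))"
proof (cases "prime n")
  case True
  then show ?thesis
    using quad_nonres_pair_prime_iff [OF True assms(1)] by simp
next
  case False
  then show ?thesis
    using quad_nonres_pair_composite [OF assms False] by simp
qed

end
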